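(* For every $x\in\mathbb T^3\setminus\mathfrak I$, the Lebesgue measure of $\mathcal S(x)$ is strictly positive.
   Context: $\mathbb{T}^3=\mathbb{R}^3/\mathbb{Z}^3$; $\omega(k)=\omega_0+\sum_{j=1}^3 2(1-\cos(2\pi k^j))$ with fixed $2<\omega_0<3$. Two wave vectors $x,y\in\mathbb{T}^3$ are connected by one collision if $\omega(y)=\omega(x)+\omega(y-x)$, or $\omega(x)=\omega(y)+\omega(x-y)$, or $\omega(x+y)=\omega(x)+\omega(y)$. The no-collision region $\mathfrak I$ is the set of $x\in\mathbb T^3$ such that no $y\in\mathbb T^3$ is connected to $x$ by one collision. For $x\in\mathbb T^3\setminus\mathfrak I$: $\mathcal S^1(x)$ is the set of $y$ connected to $x$ by one collision, $\mathcal S^n(x)=\bigcup_{z\in\mathcal S^{n-1}(x)}\mathcal S^1(z)$ for $n\ge2$, and $\mathcal S(x)=\bigcup_{n\ge1}\mathcal S^n(x)$. *)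

theory Defs
  imports "HOL-Analysis.Analysis"
begin

text \<open>The torus T^3 = R^3/Z^3 is represented by its fundamental domain [0,1)^3 in real^3,
  with group operations taken componentwise modulo 1 (via frac).\<close>

definition torus3 :: "(real^3) set" where
  "torus3 = {x. \<forall>i. 0 \<le> x$i \<and> x$i < 1}"

definition tadd :: "real^3 \<Rightarrow> real^3 \<Rightarrow> real^3" where
  "tadd x y = (\<chi> i. frac (x$i + y$i))"

definition tsub :: "real^3 \<Rightarrow> real^3 \<Rightarrow> real^3" where
  "tsub x y = (\<chi> i. frac (x$i - y$i))"

definition disp :: "real \<Rightarrow> real^3 \<Rightarrow> real" where
  "disp \<omega>0 k = \<omega>0 + (\<Sum>j\<in>UNIV. 2 * (1 - cos (2 * pi * k$j)))"

definition collides :: "real \<Rightarrow> real^3 \<Rightarrow> real^3 \<Rightarrow> bool" where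
  "collides \<omega>0 x y \<longleftrightarrow>
     disp \<omega>0 y = disp \<omega>0 x + disp \<omega>0 (tsub y x) \<or>
     disp \<omega>0 x = disp \<omega>0 y + disp \<omega>0 (tsub x y) \<or>
     disp \<omega>0 (tadd x y) = disp \<omega>0 x + disp \<omega>0 y"

definition nocoll :: "real \<Rightarrow> (real^3) set" where
  "nocoll \<omega>0 = {x \<in> torus3. \<not> (\<exists>y\<in>torus3. collides \<omega>0 x y)}"

text \<open>S^1(x), S^n(x) (for n \<ge> 1; index n here means S^n), and S(x).\<close>
definition S1 :: "real \<Rightarrow> real^3 \<Rightarrow> (real^3) set" where
  "S1 \<omega>0 x = {y \<in> torus3. collides \<omega>0 x y}"

fun Sn :: "real \<Rightarrow> nat \<Rightarrow> real^3 \<Rightarrow> (real^3) set" where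
  "Sn \<omega>0 0 x = {}"
| "Sn \<omega>0 (Suc 0) x = S1 \<omega>0 x"
| "Sn \<omega>0 (Suc (Suc n)) x = (\<Union>z\<in>Sn \<omega>0 (Suc n) x. S1 \<omega>0 z)"

definition Sall :: "real \<Rightarrow> real^3 \<Rightarrow> (real^3) set" where
  "Sall \<omega>0 x = (\<Union>n\<in>{1..}. Sn \<omega>0 n x)"

end

theory Submission
  imports Defs
begin

(*
  Every collision relation is a zero of the resonance function
  omega(p + q) - omega(p) - omega(q) = 2 * (sum_j gap(p_j, q_j)) - omega0,
  where gap(s, t) = cos 2 pi s + cos 2 pi t - cos 2 pi (s + t) - 1 <= gap_max(s) for s in [0, 1).
  Any x outside the no-collision region yields a resonant pair p, q in S(x); if both
  gap_max_sum p and gap_max_sum q were at most omega0/2, all coordinate bounds would be sharp,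
  which quantises gap_max_sum p to a multiple of 1/2 and contradicts 1 < omega0/2 < 3/2.
  So some P in S(x) has gap_max_sum P > omega0/2. Then the resonance surface of P contains a
  curve parametrised by its first coordinate, and two points of that curve whose resonance
  against a suitable z0 has opposite signs. By the intermediate value theorem, every z in the
  open neighbourhood of z0 where this sign change persists is a second collision partner of
  some point of the curve. Hence S(x) contains a nonempty open set; it is measurable because
  each S^n(x) is sigma-compact.
*)

section \<open>Reduction modulo the lattice and the resonance function\<close>

definition tproj :: "real^3 \<Rightarrow> real^3" where
  "tproj v = (\<chi> i. frac (v$i))"

lemma tproj_in_torus3: "tproj v \<in> torus3"
  by (auto simp: tproj_def torus3_def frac_lt_1)

lemma tadd_eq_tproj: "tadd p q = tproj (p + q)"
  by (simp add: tadd_def tproj_def)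

lemma tsub_eq_tproj: "tsub p q = tproj (p - q)"
  by (simp add: tsub_def tproj_def)

lemma tproj_minus_Ints: "tproj v $ i - v $ i \<in> \<int>"
  by (simp add: tproj_def frac_def)

lemma disp_eq_if_diff_Ints:
  assumes "\<And>i. u$i - v$i \<in> \<int>"
  shows "disp w u = disp w v"
  unfolding disp_def
proof (intro arg_cong[where f="\<lambda>s. w + s"] sum.cong refl)
  fix j :: 3
  from assms[of j] obtain n :: int where "u$j - v$j = of_int n"
    by (rule Ints_cases)
  then have "2 * pi * u$j = 2 * pi * v$j + 2 * pi * of_int n"
    by (simp add: algebra_simps)
  then show "2 * (1 - cos (2 * pi * u $ j)) = 2 * (1 - cos (2 * pi * v $ j))"
    by (simp add: cos_add)
qed

lemma disp_tproj: "disp w (tproj v) = disp w v"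
  by (rule disp_eq_if_diff_Ints) (rule tproj_minus_Ints)

definition resonance :: "real \<Rightarrow> real^3 \<Rightarrow> real^3 \<Rightarrow> real" where
  "resonance w p q = disp w (p + q) - disp w p - disp w q"

lemma resonance_tproj_left: "resonance w (tproj u) v = resonance w u v"
proof -
  have "disp w (tproj u + v) = disp w (u + v)"
    by (rule disp_eq_if_diff_Ints) (use tproj_minus_Ints in simp)
  then show ?thesis by (simp add: resonance_def disp_tproj)
qed

lemma resonance_commute: "resonance w p q = resonance w q p"
  by (simp add: resonance_def add.commute)

lemma resonance_tproj_right: "resonance w u (tproj v) = resonance w u v"
  by (simp add: resonance_commute[of w u] resonance_tproj_left)

lemma collides_iff_resonance:
  "collides w x y \<longleftrightarrow>
     resonance w x (y - x) = 0 \<or> resonance w y (x - y) = 0 \<or> resonance w x y = 0"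
  by (auto simp: collides_def resonance_def tadd_eq_tproj tsub_eq_tproj disp_tproj)

lemma collides_if_resonance: "resonance w x y = 0 \<Longrightarrow> collides w x y"
  by (simp add: collides_iff_resonance)

lemma collides_commute: "collides w x y \<Longrightarrow> collides w y x"
  unfolding collides_iff_resonance by (metis resonance_commute)

lemma Sall_step:
  assumes "p \<in> Sall w x" "q \<in> torus3" "collides w p q"
  shows "q \<in> Sall w x"
proof -
  obtain n where "n \<ge> 1" "p \<in> Sn w n x"
    using assms(1) by (auto simp: Sall_def)
  then obtain m where "p \<in> Sn w (Suc m) x"
    by (cases n) auto
  then have "q \<in> Sn w (Suc (Suc m)) x"
    using assms(2,3) by (auto simp: S1_def)
  then show ?thesis
    unfolding Sall_def by (intro UN_I[of "Suc (Suc m)"]) auto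
qed

lemma Sall_first_step: "q \<in> torus3 \<Longrightarrow> collides w x q \<Longrightarrow> q \<in> Sall w x"
  unfolding Sall_def by (rule UN_I[of 1]) (auto simp: S1_def)

lemma resonant_pair_in_Sall:
  assumes x: "x \<in> torus3" and "x \<notin> nocoll w"
  obtains p q where "p \<in> torus3" "q \<in> torus3" "p \<in> Sall w x" "q \<in> Sall w x"
    "resonance w p q = 0"
proof -
  note result = that
  obtain y where y: "y \<in> torus3" "collides w x y"
    using assms by (auto simp: nocoll_def)
  have yS: "y \<in> Sall w x"
    using Sall_first_step y by blast
  have xS: "x \<in> Sall w x"
    using Sall_step[OF yS x collides_commute[OF y(2)]] .
  have pair: thesis if p: "p \<in> torus3" "p \<in> Sall w x" and "resonance w p v = 0" for p v
  proof -
    have "resonance w p (tproj v) = 0"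
      using that(3) by (simp add: resonance_tproj_right)
    moreover have "tproj v \<in> Sall w x"
      using Sall_step[OF p(2) tproj_in_torus3 collides_if_resonance] calculation .
    ultimately show thesis
      using result[OF p(1) tproj_in_torus3 p(2)] by blast
  qed
  from y(2) consider "resonance w x (y - x) = 0" | "resonance w y (x - y) = 0" | "resonance w x y = 0"
    unfolding collides_iff_resonance by blast
  then show thesis
  proof cases
    case 1
    then show thesis by (rule pair[OF x xS])
  next
    case 2
    then show thesis by (rule pair[OF y(1) yS])
  next
    case 3
    then show thesis by (rule result[OF x y(1) xS yS])
  qed
qed

section \<open>Measurability of the collision orbit\<close>

definition sigma_compact :: "'a::topological_space set \<Rightarrow> bool" where
  "sigma_compact S \<longleftrightarrow> (\<exists>A. countable A \<and> (\<forall>K\<in>A. compact K) \<and> S = \<Union>A)"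

lemma sigma_compact_compact: "compact K \<Longrightarrow> sigma_compact K"
  unfolding sigma_compact_def by (intro exI[of _ "{K}"]) auto

lemma sigma_compact_imp_borel:
  fixes S :: "'a::t2_space set"
  assumes "sigma_compact S" shows "S \<in> sets borel"
proof -
  obtain A where A: "countable A" "\<forall>K\<in>A. compact K" "S = \<Union>A"
    using assms by (auto simp: sigma_compact_def)
  then have "A \<subseteq> sets borel"
    by (auto intro: borel_closed compact_imp_closed)
  then show ?thesis
    using A(1,3) sets.countable_Union by metis
qed

lemma sigma_compact_UN:
  assumes "countable I" and "\<And>i. i \<in> I \<Longrightarrow> sigma_compact (F i)"
  shows "sigma_compact (\<Union>i\<in>I. F i)"
proof -
  have "\<forall>i\<in>I. \<exists>A. countable A \<and> (\<forall>K\<in>A. compact K) \<and> F i = \<Union>A"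
    using assms(2) by (auto simp: sigma_compact_def)
  then obtain A
    where A: "\<And>i. i \<in> I \<Longrightarrow> countable (A i) \<and> (\<forall>K\<in>A i. compact K) \<and> F i = \<Union>(A i)"
    by metis
  show ?thesis
    unfolding sigma_compact_def by (rule exI[of _ "\<Union>i\<in>I. A i"]) (use A assms(1) in auto)
qed

lemma sigma_compact_snd_image:
  fixes R :: "('a::t2_space \<times> 'b::t2_space) set"
  assumes "sigma_compact A" "sigma_compact B" "closed R"
  shows "sigma_compact (snd ` ((A \<times> B) \<inter> R))"
proof -
  obtain KA KB where KA: "countable KA" "\<forall>K\<in>KA. compact K" "A = \<Union>KA"
    and KB: "countable KB" "\<forall>K\<in>KB. compact K" "B = \<Union>KB"
    using assms(1,2) unfolding sigma_compact_def by metis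
  have "snd ` ((A \<times> B) \<inter> R) = (\<Union>KL\<in>KA \<times> KB. snd ` ((fst KL \<times> snd KL) \<inter> R))"
    using KA(3) KB(3) by force
  also have "sigma_compact \<dots>"
    using KA(1,2) KB(1,2) assms(3)
    by (intro sigma_compact_UN sigma_compact_compact compact_continuous_image continuous_intros
        compact_Int_closed compact_Times) auto
  finally show ?thesis .
qed

lemma sigma_compact_torus3: "sigma_compact torus3"
proof -
  define C :: "nat \<Rightarrow> (real^3) set"
    where "C k = cbox 0 (\<chi> i. 1 - inverse (real (Suc k)))" for k
  have "x \<in> (\<Union>k. C k)" if x: "x \<in> torus3" for x
  proof -
    define m where "m = Max (range (\<lambda>i. x$i))"
    have "m \<in> range (\<lambda>i. x$i)" and le_m: "\<And>i. x$i \<le> m"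
      unfolding m_def by (simp_all add: Max_in)
    then have "m < 1"
      using x by (auto simp: torus3_def)
    then obtain k where k: "inverse (real (Suc k)) < 1 - m"
      using reals_Archimedean[of "1 - m"] by auto
    have "0 \<le> x$i \<and> x$i \<le> 1 - inverse (real (Suc k))" for i
      using x le_m[of i] k by (auto simp: torus3_def)
    then have "x \<in> C k"
      by (simp add: C_def mem_box_cart)
    then show ?thesis
      by blast
  qed
  moreover have "C k \<subseteq> torus3" for k
  proof
    fix x assume "x \<in> C k"
    then have "0 \<le> x$i \<and> x$i \<le> 1 - inverse (real (Suc k))" for i
      by (simp add: C_def mem_box_cart)
    moreover have "0 < inverse (real (Suc k))"
      by simp
    ultimately show "x \<in> torus3"
      unfolding torus3_def by (smt (verit) mem_Collect_eq)
  qed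
  ultimately have "torus3 = (\<Union>k. C k)"
    by blast
  also have "sigma_compact \<dots>"
    by (intro sigma_compact_UN sigma_compact_compact) (simp_all add: C_def)
  finally show ?thesis .
qed

lemma continuous_on_resonance:
  fixes f g :: "'a::t2_space \<Rightarrow> real^3"
  assumes "continuous_on S f" "continuous_on S g"
  shows "continuous_on S (\<lambda>z. resonance w (f z) (g z))"
  unfolding resonance_def disp_def by (intro continuous_intros assms)

lemma closed_collides: "closed {z. collides w (fst z) (snd z)}"
proof -
  have "{z. collides w (fst z) (snd z)} =
      {z. resonance w (fst z) (snd z - fst z) = 0} \<union> {z. resonance w (snd z) (fst z - snd z) = 0}
      \<union> {z. resonance w (fst z) (snd z) = 0}"
    by (auto simp: collides_iff_resonance)
  also have "closed \<dots>"
    by (intro closed_Un closed_Collect_eq continuous_on_resonance continuous_intros)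
  finally show ?thesis .
qed

lemma Sall_sets_lebesgue: "Sall w x \<in> sets lebesgue"
proof -
  define R where "R = {z. collides w (fst z) (snd z)}"
  have S1: "(\<Union>z\<in>A. S1 w z) = snd ` ((A \<times> torus3) \<inter> R)" for A
    by (force simp: S1_def R_def)
  have "sigma_compact (Sn w (Suc n) x)" for n
  proof (induction n)
    case 0
    show ?case
      using S1[of "{x}"] sigma_compact_snd_image[OF sigma_compact_compact _ closed_collides]
      by (simp add: R_def sigma_compact_torus3)
  next
    case (Suc n)
    then show ?case
      using S1 sigma_compact_snd_image[OF _ sigma_compact_torus3 closed_collides]
      by (simp add: R_def)
  qed
  moreover have "Sall w x = (\<Union>n. Sn w (Suc n) x)"
    unfolding Sall_def by (auto simp: Suc_le_eq) (metis Suc_pred')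
  ultimately have "Sall w x \<in> sets borel"
    by (simp add: sigma_compact_UN sigma_compact_imp_borel)
  then show ?thesis
    by simp
qed

section \<open>Coordinatewise form of the resonance\<close>

definition gap :: "real \<Rightarrow> real \<Rightarrow> real" where
  "gap s t = cos (2 * pi * s) + cos (2 * pi * t) - cos (2 * pi * (s + t)) - 1"

definition gap_sum :: "real^3 \<Rightarrow> real^3 \<Rightarrow> real" where
  "gap_sum p q = gap (p$1) (q$1) + gap (p$2) (q$2) + gap (p$3) (q$3)"

lemma resonance_eq_gap_sum: "resonance w p q = 2 * gap_sum p q - w"
  unfolding resonance_def disp_def gap_sum_def gap_def by (simp add: sum_3 algebra_simps)

lemma gap_commute: "gap s t = gap t s"
  by (simp add: gap_def add.commute)

lemma gap_sum_commute: "gap_sum p q = gap_sum q p"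
  by (simp add: gap_sum_def gap_commute)

lemma gap_eq: "gap s t = cos (2 * pi * s) - 1 + 2 * sin (pi * s) * sin (2 * pi * t + pi * s)"
proof -
  have "2 * sin (pi * s) * sin (2 * pi * t + pi * s) = cos (2 * pi * t) - cos (2 * pi * (s + t))"
    by (simp add: sin_times_sin algebra_simps add_divide_distrib diff_divide_distrib)
  then show ?thesis
    by (simp add: gap_def)
qed

definition gap_max :: "real \<Rightarrow> real" where
  "gap_max s = cos (2 * pi * s) - 1 + 2 * sin (pi * s)"

definition gap_max_sum :: "real^3 \<Rightarrow> real" where
  "gap_max_sum p = gap_max (p$1) + gap_max (p$2) + gap_max (p$3)"

lemma gap_max_eq: "gap_max s = 2 * sin (pi * s) - 2 * (sin (pi * s))\<^sup>2"
  using cos_double_sin[of "pi * s"] by (simp add: gap_max_def mult.assoc)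

lemma gap_max_le_half: "gap_max s \<le> 1/2"
proof -
  have "2 * x - 2 * x\<^sup>2 \<le> 1/2" for x :: real
    using zero_le_power2[of "x - 1/2"] by (simp add: power2_eq_square algebra_simps)
  then show ?thesis
    by (simp add: gap_max_eq)
qed

lemma gap_le_gap_max: "0 \<le> sin (pi * s) \<Longrightarrow> gap s t \<le> gap_max s"
  using mult_left_mono[OF sin_le_one, of "sin (pi * s)" "2 * pi * t + pi * s"]
  by (simp add: gap_eq gap_max_def)

lemma sin_pi_nonneg: "0 \<le> s \<Longrightarrow> s < 1 \<Longrightarrow> 0 \<le> sin (pi * s)"
  by (rule sin_ge_zero) auto

lemma sin_three_times: "sin (3 * x) = 3 * sin x - 4 * (sin x)^3" for x :: real
proof -
  have "sin (3 * x) = sin (2 * x + x)"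
    by simp
  also have "\<dots> = 2 * sin x * (cos x * cos x) + (1 - 2 * (sin x)\<^sup>2) * sin x"
    by (simp only: sin_add sin_double cos_double_sin mult.assoc)
  also have "cos x * cos x = 1 - (sin x)\<^sup>2"
    using sin_cos_squared_add[of x] by (simp add: power2_eq_square)
  finally show ?thesis
    by (simp add: power2_eq_square power3_eq_cube algebra_simps)
qed

lemma gap_max_quantized:
  assumes s: "0 \<le> s" "s < 1" and t: "0 \<le> t" "t < 1"
    and max_s: "gap s t = gap_max s" and max_t: "gap s t = gap_max t"
  shows "gap_max s = 0 \<or> gap_max s = 1/2"
proof (cases "sin (pi * s) = 0 \<or> sin (pi * t) = 0")
  case True
  then show ?thesis
    using max_s max_t by (auto simp: gap_max_eq)
next
  case False
  then have ps: "0 < sin (pi * s)" and pt: "0 < sin (pi * t)"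
    using sin_pi_nonneg[OF s] sin_pi_nonneg[OF t] by auto
  have "sin (2 * pi * t + pi * s) = 1"
    using max_s ps by (simp add: gap_eq gap_max_def)
  moreover have "sin (2 * pi * s + pi * t) = 1"
    using max_t pt unfolding gap_commute[of s t] by (simp add: gap_eq gap_max_def)
  ultimately obtain n m :: int where n: "2 * pi * t + pi * s = (2 * n + 1/2) * pi"
    and m: "2 * pi * s + pi * t = (2 * m + 1/2) * pi"
    by (auto simp: sin_eq_1)
  then have "(s - t) * pi = (2 * (m - n)) * pi"
    using arg_cong2[where f="(-)", OF m n] by (simp add: algebra_simps)
  then have st: "s - t = 2 * (real_of_int m - real_of_int n)"
    by simp
  then have "real_of_int (m - n) < real_of_int 1" "real_of_int (- 1) < real_of_int (m - n)"
    using s t by simp_all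
  then have "m = n"
    by (simp only: of_int_less_iff)
  with st have "s = t"
    by simp
  with n have "3 * (pi * s) = (2 * n + 1/2) * pi"
    by (simp add: algebra_simps)
  then have "sin (3 * (pi * s)) = 1"
    by (auto simp: sin_eq_1)
  then have "3 * sin (pi * s) - 4 * (sin (pi * s))^3 = 1"
    by (simp only: sin_three_times)
  then have "(sin (pi * s) + 1) * (2 * sin (pi * s) - 1)\<^sup>2 = 0"
    by (simp add: power2_eq_square power3_eq_cube algebra_simps)
  then have half: "sin (pi * s) = 1/2"
    using ps by simp
  show ?thesis
    unfolding gap_max_eq half by (simp add: power2_eq_square)
qed

lemma resonant_pair_gap_max:
  assumes w: "2 < w" "w < 3" and p: "p \<in> torus3" and q: "q \<in> torus3"
    and res: "resonance w p q = 0"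
  shows "w/2 < gap_max_sum p \<or> w/2 < gap_max_sum q"
proof (rule ccontr)
  assume "\<not> ?thesis"
  then have small: "gap_max_sum p \<le> w/2" "gap_max_sum q \<le> w/2"
    by auto
  have sum: "gap_sum p q = w/2"
    using res by (simp add: resonance_eq_gap_sum)
  have coord: "0 \<le> p$i" "p$i < 1" "0 \<le> q$i" "q$i < 1" for i
    using p q by (auto simp: torus3_def)
  have le_p: "gap (p$i) (q$i) \<le> gap_max (p$i)" for i
    by (rule gap_le_gap_max) (rule sin_pi_nonneg[OF coord(1,2)])
  have le_q: "gap (p$i) (q$i) \<le> gap_max (q$i)" for i
    unfolding gap_commute[of "p$i"] by (rule gap_le_gap_max) (rule sin_pi_nonneg[OF coord(3,4)])
  have eq: "gap (p$i) (q$i) = gap_max (p$i) \<and> gap (p$i) (q$i) = gap_max (q$i)" if "i \<in> {1, 2, 3}" for i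
    using that le_p[of 1] le_p[of 2] le_p[of 3] le_q[of 1] le_q[of 2] le_q[of 3] sum small
    unfolding gap_sum_def gap_max_sum_def by auto
  have "gap_max (p$i) = 0 \<or> gap_max (p$i) = 1/2" if "i \<in> {1, 2, 3}" for i
    using eq[OF that] gap_max_quantized coord by blast
  then have "gap_max (p$1) \<in> {0, 1/2}" "gap_max (p$2) \<in> {0, 1/2}" "gap_max (p$3) \<in> {0, 1/2}"
    by auto
  moreover have "gap_max (p$1) + gap_max (p$2) + gap_max (p$3) = w/2"
    using eq sum unfolding gap_sum_def by simp
  ultimately show False
    using w by auto
qed

section \<open>Two collisions sweep out an open set\<close>

lemma abs_sin_diff_le: "\<bar>sin a - sin b\<bar> \<le> \<bar>a - b\<bar>" for a b :: real
proof -
  have "\<bar>sin a - sin b\<bar> = 2 * \<bar>sin ((a - b) / 2)\<bar> * \<bar>cos ((a + b) / 2)\<bar>"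
    by (simp add: sin_diff_sin abs_mult)
  also have "\<dots> \<le> 2 * \<bar>(a - b) / 2\<bar> * 1"
    by (intro mult_mono abs_sin_x_le_abs_x abs_cos_le_one) auto
  finally show ?thesis
    by simp
qed

lemma sine_level_curve:
  fixes R1 R2 R3 b \<alpha> \<beta> \<gamma> :: real
  assumes R: "0 < R1" "0 < R2" "0 < R3" and b: "0 < b" "b < R1 + R2 + R3"
  obtains \<delta> c u v where "0 < \<delta>" "continuous_on {c - \<delta>..c + \<delta>} u"
    "\<And>y. y \<in> {c - \<delta>..c + \<delta>} \<Longrightarrow>
       R1 * sin (2 * pi * y + \<alpha>) + R2 * sin (2 * pi * u y + \<beta>) + R3 * sin (2 * pi * v + \<gamma>) = b"
proof -
  \<comment> \<open>Freeze the third sine at \<kappa>, let the first angle vary and solve for the second with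
    arcsin; the argument \<sigma> of arcsin stays in [-1, 1] while the first sine is within
    (1 - \<kappa>) R2 / (2 R1) of \<kappa>.\<close>
  define \<kappa> where "\<kappa> = b / (R1 + R2 + R3)"
  have \<kappa>: "0 < \<kappa>" "\<kappa> < 1"
    using R b by (auto simp: \<kappa>_def field_simps)
  define c where "c = (arcsin \<kappa> - \<alpha>) / (2 * pi)"
  define v where "v = (arcsin \<kappa> - \<gamma>) / (2 * pi)"
  define \<sigma> where "\<sigma> y = \<kappa> - (sin (2 * pi * y + \<alpha>) - \<kappa>) * R1 / R2" for y
  define u where "u y = (arcsin (\<sigma> y) - \<beta>) / (2 * pi)" for y
  define \<delta> where "\<delta> = (1 - \<kappa>) * R2 / (4 * pi * R1)"
  have \<delta>: "0 < \<delta>"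
    using \<kappa> R by (simp add: \<delta>_def)
  have \<sigma>_bound: "-1 \<le> \<sigma> y \<and> \<sigma> y \<le> 1" if y: "y \<in> {c - \<delta>..c + \<delta>}" for y
  proof -
    have "\<bar>sin (2 * pi * y + \<alpha>) - \<kappa>\<bar> = \<bar>sin (2 * pi * y + \<alpha>) - sin (2 * pi * c + \<alpha>)\<bar>"
      using \<kappa> by (simp add: c_def)
    also have "\<dots> \<le> \<bar>2 * pi * (y - c)\<bar>"
      using abs_sin_diff_le[of "2 * pi * y + \<alpha>" "2 * pi * c + \<alpha>"] by (simp add: algebra_simps)
    also have "\<dots> \<le> 2 * pi * \<delta>"
      using y by (simp add: abs_mult abs_le_iff)
    finally have "\<bar>\<sigma> y - \<kappa>\<bar> \<le> 2 * pi * \<delta> * R1 / R2"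
      using R by (simp add: \<sigma>_def abs_mult divide_right_mono mult_right_mono)
    also have "\<dots> = (1 - \<kappa>) / 2"
      using R by (simp add: \<delta>_def field_simps)
    finally have "\<bar>\<sigma> y - \<kappa>\<bar> \<le> (1 - \<kappa>) / 2" .
    then show ?thesis
      using \<kappa> abs_le_D1 abs_le_D2 by fastforce
  qed
  have "continuous_on {c - \<delta>..c + \<delta>} u"
    unfolding u_def \<sigma>_def
    by (intro continuous_intros continuous_on_arcsin) (use \<sigma>_bound R in \<open>auto simp: \<sigma>_def\<close>)
  moreover have "R1 * sin (2 * pi * y + \<alpha>) + R2 * sin (2 * pi * u y + \<beta>) + R3 * sin (2 * pi * v + \<gamma>) = b"
    if "y \<in> {c - \<delta>..c + \<delta>}" for y
  proof -
    have "sin (2 * pi * u y + \<beta>) = \<sigma> y" "sin (2 * pi * v + \<gamma>) = \<kappa>"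
      using \<sigma>_bound[OF that] \<kappa> by (simp_all add: u_def v_def)
    moreover have "R2 * \<sigma> y = R2 * \<kappa> - R1 * sin (2 * pi * y + \<alpha>) + R1 * \<kappa>"
      using R by (simp add: \<sigma>_def field_simps)
    moreover have "R1 * \<kappa> + R2 * \<kappa> + R3 * \<kappa> = b"
      unfolding distrib_right[symmetric] \<kappa>_def using R by simp
    ultimately show ?thesis
      by simp
  qed
  ultimately show ?thesis
    using that \<delta> by blast
qed

lemma gap_max_pos_imp_sin_pos:
  assumes "0 \<le> s" "s < 1" "0 < gap_max s"
  shows "0 < sin (pi * s)"
proof -
  have "sin (pi * s) \<noteq> 0"
    using assms(3) by (auto simp: gap_max_eq)
  then show ?thesis
    using sin_pi_nonneg[OF assms(1,2)] by linarith
qed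

lemma resonance_curve:
  assumes a: "1 < a" and P: "P \<in> torus3" and big: "a < gap_max_sum P"
  obtains \<delta> c q where "0 < \<delta>" "continuous_on {c - \<delta>..c + \<delta>} q"
    "\<And>y. y \<in> {c - \<delta>..c + \<delta>} \<Longrightarrow> q y $ 1 = y \<and> gap_sum P (q y) = a"
proof -
  define R where "R i = 2 * sin (pi * P$i)" for i
  define C where "C i = cos (2 * pi * P$i) - 1" for i
  have "0 < gap_max (P$1)" "0 < gap_max (P$2)" "0 < gap_max (P$3)"
    using big a gap_max_le_half[of "P$1"] gap_max_le_half[of "P$2"] gap_max_le_half[of "P$3"]
    unfolding gap_max_sum_def by linarith+
  then have "0 < gap_max (P$i)" for i
    using exhaust_3[of i] by auto
  then have R: "0 < R i" for i
    using P gap_max_pos_imp_sin_pos by (auto simp: R_def torus3_def)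
  have "C i \<le> 0" for i
    by (simp add: C_def)
  moreover have "gap_max_sum P = (C 1 + R 1) + (C 2 + R 2) + (C 3 + R 3)"
    by (simp add: gap_max_sum_def gap_max_def C_def R_def)
  ultimately have b: "0 < a - (C 1 + C 2 + C 3)" "a - (C 1 + C 2 + C 3) < R 1 + R 2 + R 3"
    using a big by (smt (verit))+
  obtain \<delta> c u v where \<delta>: "0 < \<delta>" and u: "continuous_on {c - \<delta>..c + \<delta>} u"
    and level: "\<And>y. y \<in> {c - \<delta>..c + \<delta>} \<Longrightarrow>
       R 1 * sin (2 * pi * y + pi * P$1) + R 2 * sin (2 * pi * u y + pi * P$2)
         + R 3 * sin (2 * pi * v + pi * P$3) = a - (C 1 + C 2 + C 3)"
    using sine_level_curve[OF R[of 1] R[of 2] R[of 3] b,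
        where \<alpha> = "pi * P$1" and \<beta> = "pi * P$2" and \<gamma> = "pi * P$3"] by blast
  define q :: "real \<Rightarrow> real^3"
    where "q y = y *\<^sub>R axis 1 1 + u y *\<^sub>R axis 2 1 + v *\<^sub>R axis 3 1" for y
  have q: "q y $ 1 = y" "q y $ 2 = u y" "q y $ 3 = v" for y
    by (simp_all add: q_def axis_def)
  have "continuous_on {c - \<delta>..c + \<delta>} q"
    unfolding q_def by (intro continuous_intros u)
  moreover have "gap_sum P (q y) = a" if "y \<in> {c - \<delta>..c + \<delta>}" for y
    using level[OF that] by (simp add: gap_sum_def gap_eq q C_def R_def)
  ultimately show ?thesis
    using that \<delta> q(1) by blast
qed

lemma gap_diff: "gap y u - gap y v = 4 * sin (pi * y) * sin (pi * (u - v)) * cos (pi * (u + v + y))"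
proof -
  have "gap y u - gap y v
      = 2 * sin (pi * y) * (sin (2 * pi * u + pi * y) - sin (2 * pi * v + pi * y))"
    by (simp add: gap_eq[of y] gap_commute[of y] algebra_simps)
  also have "sin (2 * pi * u + pi * y) - sin (2 * pi * v + pi * y)
      = 2 * sin (pi * (u - v)) * cos (pi * (u + v + y))"
    by (simp add: sin_diff_sin algebra_simps add_divide_distrib diff_divide_distrib)
  finally show ?thesis
    by simp
qed

lemma sin_cos_sign_change:
  assumes "c + y0 - 1/2 \<in> \<int>" and \<eta>: "0 < \<eta>" "\<eta> < 1" "sin (pi * \<eta>) < \<bar>sin (pi * y0)\<bar>"
  shows "(sin (pi * (y0 - \<eta>)) * cos (pi * (c + (y0 - \<eta>))))
    * (sin (pi * (y0 + \<eta>)) * cos (pi * (c + (y0 + \<eta>)))) < 0"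
proof -
  from assms(1) obtain k :: int where k: "c + y0 - 1/2 = of_int k"
    by (rule Ints_cases)
  define X where "X = pi * (c + y0)"
  define Y where "Y = pi * \<eta>"
  have "cos (2 * X) = cos (pi + 2 * pi * of_int k)"
    using k by (simp add: X_def algebra_simps)
  also have "\<dots> = -1"
    by (simp add: cos_add)
  finally have "cos (pi * (c + (y0 - \<eta>))) * cos (pi * (c + (y0 + \<eta>))) = - (sin Y)\<^sup>2"
    using cos_times_cos[of "X - Y" "X + Y"] cos_double_sin[of Y]
    by (simp add: X_def Y_def algebra_simps)
  moreover have "sin (pi * (y0 - \<eta>)) * sin (pi * (y0 + \<eta>)) = (sin (pi * y0))\<^sup>2 - (sin Y)\<^sup>2"
    using sin_times_sin[of "pi * y0 - Y" "pi * y0 + Y"] cos_double_sin[of Y] cos_double_sin[of "pi * y0"]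
    by (simp add: Y_def algebra_simps)
  moreover have "0 < sin Y"
    using \<eta> by (simp add: Y_def sin_gt_zero)
  moreover have "(sin Y)\<^sup>2 < (sin (pi * y0))\<^sup>2"
    using power_strict_mono[of "sin Y" "\<bar>sin (pi * y0)\<bar>" 2] \<eta>(3) calculation(3)
    by (simp add: Y_def)
  ultimately have "(sin (pi * (y0 - \<eta>)) * sin (pi * (y0 + \<eta>)))
      * (cos (pi * (c + (y0 - \<eta>))) * cos (pi * (c + (y0 + \<eta>)))) < 0"
    by (simp add: mult_pos_neg)
  then show ?thesis
    by (simp add: ac_simps)
qed

lemma resonance_change_first_coord:
  assumes "q$1 = y" "gap_sum P q = w/2" "z$2 = P$2" "z$3 = P$3"
  shows "resonance w q z = 8 * sin (pi * (z$1 - P$1)) * (sin (pi * y) * cos (pi * (z$1 + P$1 + y)))"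
proof -
  have "resonance w q z = 2 * (gap_sum q z - gap_sum q P)"
    using assms(2) by (simp add: resonance_eq_gap_sum gap_sum_commute)
  also have "\<dots> = 2 * (gap y (z$1) - gap y (P$1))"
    using assms by (simp add: gap_sum_def)
  finally show ?thesis
    by (simp add: gap_diff)
qed

lemma countable_Ints_translate: "countable {t::real. d - t \<in> \<int>}"
proof -
  have "{t::real. d - t \<in> \<int>} = (\<lambda>n::int. d - of_int n) ` UNIV"
  proof (intro equalityI subsetI)
    fix t assume "t \<in> {t. d - t \<in> \<int>}"
    then obtain n where "d - t = of_int n"
      by (auto elim: Ints_cases)
    then show "t \<in> range (\<lambda>n::int. d - of_int n)"
      by (intro image_eqI[of _ _ n]) auto
  qed auto
  then show ?thesis
    by simp
qed

lemma exists_avoiding_Ints_translate: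
  fixes a b d :: real
  assumes "a < b"
  obtains y where "a < y" "y < b" "y \<notin> \<int>" "d - y \<notin> \<int>"
proof -
  have "countable ({t::real. 0 - t \<in> \<int>} \<union> {t. d - t \<in> \<int>})"
    by (simp only: countable_Un_iff countable_Ints_translate)
  moreover have "uncountable {a<..<b}"
    using assms by (simp add: uncountable_open_interval)
  ultimately obtain y where "y \<in> {a<..<b}" "y \<notin> {t. 0 - t \<in> \<int>} \<union> {t. d - t \<in> \<int>}"
    by (metis countable_subset subsetI)
  then show ?thesis
    using that by auto
qed

lemma exists_sign_window:
  fixes a b d :: real
  assumes "a < b"
  obtains y0 \<eta> where "a \<le> y0 - \<eta>" "y0 + \<eta> \<le> b" "0 < \<eta>" "\<eta> < 1"
    "sin (pi * \<eta>) < \<bar>sin (pi * y0)\<bar>" "d - y0 \<notin> \<int>"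
proof -
  obtain y0 where y0: "a < y0" "y0 < b" "y0 \<notin> \<int>" "d - y0 \<notin> \<int>"
    using exists_avoiding_Ints_translate[OF assms] by blast
  have "sin (pi * y0) \<noteq> 0"
    using y0(3) by (auto simp: sin_zero_iff_int2)
  define \<eta> where "\<eta> = min (min (y0 - a) (b - y0)) (\<bar>sin (pi * y0)\<bar> / 4)"
  have \<eta>_le: "\<eta> \<le> \<bar>sin (pi * y0)\<bar> / 4"
    unfolding \<eta>_def by (rule min.cobounded2)
  then have \<eta>: "0 < \<eta>" "\<eta> < 1"
    using y0 \<open>sin (pi * y0) \<noteq> 0\<close> abs_sin_le_one[of "pi * y0"]
    by (simp add: \<eta>_def, linarith)
  have "sin (pi * \<eta>) \<le> pi * \<eta>"
    using \<eta> by (intro sin_x_le_x) simp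
  also have "\<dots> \<le> pi * (\<bar>sin (pi * y0)\<bar> / 4)"
    using \<eta>_le by simp
  also have "\<dots> < \<bar>sin (pi * y0)\<bar>"
    using pi_less_4 \<open>sin (pi * y0) \<noteq> 0\<close> by simp
  finally have "sin (pi * \<eta>) < \<bar>sin (pi * y0)\<bar>" .
  moreover have "\<eta> \<le> y0 - a" "\<eta> \<le> b - y0"
    by (simp_all add: \<eta>_def)
  ultimately show ?thesis
    using that[of y0 \<eta>] \<eta> y0(4) by simp
qed

lemma resonance_sign_change:
  assumes P: "P \<in> torus3" and \<delta>: "0 < \<delta>"
    and curve: "\<And>y. y \<in> {c - \<delta>..c + \<delta>} \<Longrightarrow> q y $ 1 = y \<and> gap_sum P (q y) = w/2"
  obtains lo hi z where "lo \<le> hi" "{lo..hi} \<subseteq> {c - \<delta>..c + \<delta>}" "z \<in> torus3"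
    "resonance w (q lo) z * resonance w (q hi) z < 0"
proof -
  obtain y0 \<eta> where window: "c - \<delta> \<le> y0 - \<eta>" "y0 + \<eta> \<le> c + \<delta>"
    and \<eta>: "0 < \<eta>" "\<eta> < 1" "sin (pi * \<eta>) < \<bar>sin (pi * y0)\<bar>"
    and y0: "(1/2 - 2 * P$1) - y0 \<notin> \<int>"
    using exists_sign_window[of "c - \<delta>" "c + \<delta>"] \<delta> by auto
  \<comment> \<open>z differs from P only in its first coordinate, chosen so that the cosine factor of
    resonance_change_first_coord vanishes at y0; the choice of y0 keeps both sine factors
    nonzero.\<close>
  define z :: "real^3" where "z = vector [frac (1/2 - P$1 - y0), P$2, P$3]"
  have "z \<in> torus3"
    using P by (auto simp: torus3_def z_def forall_3 frac_lt_1)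
  have "z$1 + P$1 + y0 - 1/2 \<in> \<int>"
    by (simp add: z_def frac_def)
  from sin_cos_sign_change[OF this \<eta>]
  have sign: "sin (pi * (y0 - \<eta>)) * cos (pi * (z$1 + P$1 + (y0 - \<eta>)))
      * (sin (pi * (y0 + \<eta>)) * cos (pi * (z$1 + P$1 + (y0 + \<eta>)))) < 0" .
  have "(1/2 - 2 * P$1) - y0 = (z$1 - P$1) + of_int \<lfloor>1/2 - P$1 - y0\<rfloor>"
    by (simp add: z_def frac_def)
  then have "z$1 - P$1 \<notin> \<int>"
    using y0 by (metis Ints_add Ints_of_int)
  then have A: "0 < (8 * sin (pi * (z$1 - P$1)))\<^sup>2"
    by (auto simp: sin_zero_iff_int2)
  have interval: "{y0 - \<eta>..y0 + \<eta>} \<subseteq> {c - \<delta>..c + \<delta>}"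
    using window by auto
  define f where "f y = sin (pi * y) * cos (pi * (z$1 + P$1 + y))" for y
  have res: "resonance w (q y) z = 8 * sin (pi * (z$1 - P$1)) * f y"
    if "y \<in> {y0 - \<eta>..y0 + \<eta>}" for y
    unfolding f_def using curve[of y] that interval
    by (intro resonance_change_first_coord) (auto simp: z_def)
  have "resonance w (q (y0 - \<eta>)) z * resonance w (q (y0 + \<eta>)) z
      = (8 * sin (pi * (z$1 - P$1)))\<^sup>2 * (f (y0 - \<eta>) * f (y0 + \<eta>))"
    using \<eta>(1) by (simp add: res power2_eq_square)
  also have "\<dots> < 0"
    using sign A by (simp add: f_def mult_pos_neg)
  finally show ?thesis
    using that[OF _ interval \<open>z \<in> torus3\<close>] \<eta>(1) by simp
qed

lemma IVT_product_neg:
  fixes f :: "real \<Rightarrow> real"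
  assumes "lo \<le> hi" "continuous_on {lo..hi} f" "f lo * f hi < 0"
  obtains y where "y \<in> {lo..hi}" "f y = 0"
proof -
  consider "f lo < 0" "0 < f hi" | "0 < f lo" "f hi < 0"
    using assms(3) by (auto simp: mult_less_0_iff)
  then have "\<exists>y\<in>{lo..hi}. f y = 0"
    by cases (use IVT'[of f lo 0 hi] IVT2'[of f hi 0 lo] assms(1,2) in auto)
  then show ?thesis
    using that by blast
qed

lemma two_collision_open_set:
  assumes w: "2 < w" and P: "P \<in> torus3" and big: "w/2 < gap_max_sum P"
  obtains U where "open U" "U \<noteq> {}" "U \<subseteq> torus3"
    "\<And>z. z \<in> U \<Longrightarrow> \<exists>q\<in>torus3. collides w P q \<and> collides w q z"
proof -
  have "1 < w/2"
    using w by simp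
  then obtain \<delta> c q where \<delta>: "0 < \<delta>" and cont: "continuous_on {c - \<delta>..c + \<delta>} q"
    and curve: "\<And>y. y \<in> {c - \<delta>..c + \<delta>} \<Longrightarrow> q y $ 1 = y \<and> gap_sum P (q y) = w/2"
    using resonance_curve[OF _ P big] by blast
  obtain lo hi z0 where lohi: "lo \<le> hi" "{lo..hi} \<subseteq> {c - \<delta>..c + \<delta>}" and "z0 \<in> torus3"
    and z0: "resonance w (q lo) z0 * resonance w (q hi) z0 < 0"
    using resonance_sign_change[OF P \<delta> curve] by blast
  define V where "V = {z. resonance w (q lo) z * resonance w (q hi) z < 0}"
  define B :: "(real^3) set" where "B = box 0 (\<chi> i. 1)"
  have "open V"
    unfolding V_def by (intro open_Collect_less continuous_intros continuous_on_resonance)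
  moreover have "closure B = cbox 0 (\<chi> i. 1)"
  proof -
    have "(\<chi> i. 1/2) \<in> B"
      by (simp add: B_def mem_box_cart)
    then show ?thesis
      unfolding B_def by (intro closure_box) auto
  qed
  then have "z0 \<in> V \<inter> closure B"
    using z0 \<open>z0 \<in> torus3\<close> by (auto simp: V_def torus3_def mem_box_cart less_imp_le)
  ultimately have "V \<inter> B \<noteq> {}"
    using open_Int_closure_eq_empty by blast
  moreover have "B \<subseteq> torus3"
    by (auto simp: B_def torus3_def mem_box_cart less_imp_le)
  moreover have "\<exists>p\<in>torus3. collides w P p \<and> collides w p z" if "z \<in> V" for z
  proof -
    have "continuous_on {lo..hi} (\<lambda>y. resonance w (q y) z)"
      using lohi(2) by (intro continuous_on_resonance continuous_on_subset[OF cont] continuous_intros)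
    then obtain y where y: "y \<in> {lo..hi}" "resonance w (q y) z = 0"
      using IVT_product_neg[OF lohi(1)] \<open>z \<in> V\<close> by (auto simp: V_def)
    have "resonance w P (q y) = 0"
      using curve[of y] y(1) lohi(2) by (auto simp: resonance_eq_gap_sum)
    then have "resonance w P (tproj (q y)) = 0"
      by (simp add: resonance_tproj_right)
    moreover have "resonance w (tproj (q y)) z = 0"
      using y by (simp add: resonance_tproj_left)
    ultimately show ?thesis
      using tproj_in_torus3 collides_if_resonance by blast
  qed
  ultimately show ?thesis
    using that[of "V \<inter> B"] \<open>open V\<close> by (auto simp: B_def)
qed

lemma emeasure_lebesgue_open_pos:
  fixes U :: "'a::euclidean_space set"
  assumes "open U" "U \<noteq> {}"
  shows "0 < emeasure lebesgue U"
proof -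
  obtain x e where "x \<in> U" "0 < e" "ball x e \<subseteq> U"
    using assms openE by blast
  then obtain a b where "x \<in> box a b" "box a b \<subseteq> U"
    by (metis rational_boxes order_trans)
  then have "0 < emeasure lebesgue (box a b)"
    by (auto simp: emeasure_lborel_box_eq mem_box algebra_simps intro!: prod_pos)
  also have "\<dots> \<le> emeasure lebesgue U"
    using \<open>box a b \<subseteq> U\<close> assms(1) by (intro emeasure_mono) auto
  finally show ?thesis .
qed

theorem mainTheorem6:
  fixes \<omega>0 :: real and x :: "real^3"
  assumes "2 < \<omega>0" and "\<omega>0 < 3"
    and "x \<in> torus3" and "x \<notin> nocoll \<omega>0"
  shows "Sall \<omega>0 x \<in> sets lebesgue \<and> emeasure lebesgue (Sall \<omega>0 x) > 0"
proof
  show meas: "Sall \<omega>0 x \<in> sets lebesgue"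
    by (rule Sall_sets_lebesgue)
  obtain p q where "p \<in> torus3" "q \<in> torus3" "p \<in> Sall \<omega>0 x" "q \<in> Sall \<omega>0 x"
    and "resonance \<omega>0 p q = 0"
    using resonant_pair_in_Sall[OF assms(3,4)] .
  then obtain P where P: "P \<in> torus3" "P \<in> Sall \<omega>0 x" "\<omega>0/2 < gap_max_sum P"
    using resonant_pair_gap_max[OF assms(1,2)] by blast
  obtain U where U: "open U" "U \<noteq> {}" "U \<subseteq> torus3"
    and two: "\<And>z. z \<in> U \<Longrightarrow> \<exists>q\<in>torus3. collides \<omega>0 P q \<and> collides \<omega>0 q z"
    using two_collision_open_set[OF assms(1) P(1,3)] by blast
  have "U \<subseteq> Sall \<omega>0 x"
    using U(3) two Sall_step[OF P(2)] Sall_step by blast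
  then have "emeasure lebesgue U \<le> emeasure lebesgue (Sall \<omega>0 x)"
    using meas by (intro emeasure_mono)
  then show "emeasure lebesgue (Sall \<omega>0 x) > 0"
    using emeasure_lebesgue_open_pos[OF U(1,2)] by simp
qed

end
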